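(* Let $\lambda_1,\dots,\lambda_p\ge0$ be pairwise distinct, $\Sigma=\mathrm{diag}(\lambda_1,\dots,\lambda_p)$, $E$ a real symmetric $p\times p$ matrix, $\widehat\Sigma=\Sigma+E$, $x$ an eigenvalue of $\widehat\Sigma$, and $k\in\arg\min_m|\lambda_m-x|$. Let $\Lambda_k=|D_k|^{1/2}E|D_k|^{1/2}$ and suppose $\|\Lambda_k\|<1$. Then $I_p-D_kEP_k$ is invertible, and every eigenvector $\vec\eta$ of $\widehat\Sigma$ for $x$ satisfies $\langle\vec\eta,\vec\mu_k\rangle\ne0$; normalizing so that $\langle\vec\eta,\vec\mu_k\rangle=1$, we have $$\|\vec\eta-\vec\mu_k\|\le\sqrt{\frac{2}{\delta_k}}\;\frac{1}{1-\|\Lambda_k\|}\;\Bigl(\sum_{j\ne k}\frac{E_{jk}^2}{|\lambda_j-x|}\Bigr)^{1/2}.$$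
   Context: $\vec\mu_1,\dots,\vec\mu_p$ are the standard basis vectors of $\mathbb R^p$; $\|\cdot\|$ is the Euclidean norm for vectors and operator norm for matrices; $\delta_k=\min_{j\ne k}|\lambda_k-\lambda_j|$. $P_k$ is the diagonal matrix with entry $0$ at position $k$ and $1$ elsewhere. $D_k=-\mathrm{diag}(d_1,\dots,d_p)$ with $d_j=1/(\lambda_j-x)$ for $j\ne k$ and $d_k=0$ (well defined since $x\ne\lambda_j$ for $j\neq k$ by the choice of $k$). $|D_k|^{1/2}$ is the diagonal matrix with entries $|\lambda_j-x|^{-1/2}$ for $j\ne k$ and $0$ at position $k$. *)

theory Defs
  imports "HOL-Analysis.Analysis"
begin

text \<open>Matrices are p x p with p = CARD('n); indices range over the finite type 'n.\<close>

definition diag_mat :: "('n::finite \<Rightarrow> real) \<Rightarrow> real^'n^'n" where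
  "diag_mat d = (\<chi> i j. if i = j then d i else 0)"

definition mat_opnorm :: "real^'n^'m \<Rightarrow> real" where
  "mat_opnorm A = onorm (\<lambda>v. A *v v)"

definition Pk :: "'n::finite \<Rightarrow> real^'n^'n" where
  "Pk k = diag_mat (\<lambda>j. if j = k then 0 else 1)"

definition Dk :: "('n::finite \<Rightarrow> real) \<Rightarrow> real \<Rightarrow> 'n \<Rightarrow> real^'n^'n" where
  "Dk lam x k = - diag_mat (\<lambda>j. if j = k then 0 else 1 / (lam j - x))"

definition absDk_sqrt :: "('n::finite \<Rightarrow> real) \<Rightarrow> real \<Rightarrow> 'n \<Rightarrow> real^'n^'n" where
  "absDk_sqrt lam x k = diag_mat (\<lambda>j. if j = k then 0 else 1 / sqrt \<bar>lam j - x\<bar>)"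

definition delta_k :: "('n::finite \<Rightarrow> real) \<Rightarrow> 'n \<Rightarrow> real" where
  "delta_k lam k = Min {\<bar>lam k - lam j\<bar> | j. j \<noteq> k}"

end

theory Submission
  imports Defs
begin

(* Away from the coordinate k the eigenvalue equation reads (lam_j - x) eta_j = -(E eta)_j.
   Rescaling the coordinates j ~= k by |lam_j - x|^(1/2) turns it into the fixed-point relation
   |u_j| = |(Lambda_k u + |D_k|^(1/2) c)_j| on those coordinates, where c collects the contribution
   of coordinate k.  Since ||Lambda_k|| < 1 this forces ||u|| <= |||D_k|^(1/2) c|| / (1 - ||Lambda_k||):
   with c = 0 it gives injectivity of I - D_k E P_k and eta_k ~= 0, with c = E mu_k the deviation
   bound.  Undoing the rescaling costs at most (2/delta_k)^(1/2), because
   delta_k <= |lam_k - lam_j| <= 2 |lam_j - x| when lam_k is the eigenvalue nearest to x. *)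

lemma diag_mat_mult_vec: "diag_mat d *v v = (\<chi> i. d i * v$i)"
proof -
  have "(\<Sum>j\<in>UNIV. (if i = j then d i else 0) * v$j) = d i * v$i" for i
    by (simp add: if_distrib[of "\<lambda>a. a * _"] cong: if_cong)
  then show ?thesis by (simp add: diag_mat_def matrix_vector_mult_def vec_eq_iff)
qed

lemma uminus_diag_mat: "- diag_mat d = diag_mat (\<lambda>j. - d j)"
  by (simp add: diag_mat_def vec_eq_iff)

lemma norm_mult_vec_le_mat_opnorm: "norm (M *v u) \<le> mat_opnorm M * norm u"
  unfolding mat_opnorm_def by (rule onorm) simp

lemma eigenvector_diag_plus_component:
  assumes "(diag_mat lam + E) *v \<eta> = x *\<^sub>R \<eta>"
  shows "(lam j - x) * \<eta>$j = - (E *v \<eta>)$j"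
proof -
  have "((diag_mat lam + E) *v \<eta>)$j = (x *\<^sub>R \<eta>)$j" using assms by simp
  then show ?thesis by (simp add: matrix_vector_mult_add_rdistrib diag_mat_mult_vec algebra_simps)
qed

lemma norm_absDk_sqrt_column:
  "norm (absDk_sqrt lam x k *v (E *v axis k 1))
     = sqrt (\<Sum>j\<in>{j. j \<noteq> k}. (E $ j $ k)^2 / \<bar>lam j - x\<bar>)"
proof -
  have "norm (absDk_sqrt lam x k *v (E *v axis k 1))
      = sqrt (\<Sum>j\<in>UNIV. if j = k then 0 else (E $ j $ k)^2 / \<bar>lam j - x\<bar>)"
    unfolding norm_vec_def L2_set_def
    by (intro arg_cong[where f = sqrt] sum.cong refl)
      (simp add: absDk_sqrt_def diag_mat_mult_vec matrix_vector_mult_basis column_def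
        power_mult_distrib power_divide)
  also have "(\<Sum>j\<in>UNIV. if j = k then 0 else (E $ j $ k)^2 / \<bar>lam j - x\<bar>)
      = (\<Sum>j\<in>{j. j \<noteq> k}. (E $ j $ k)^2 / \<bar>lam j - x\<bar>)"
    by (rule sum.mono_neutral_cong_right) auto
  finally show ?thesis .
qed

locale nearest_eigenvalue =
  fixes lam :: "'n::finite \<Rightarrow> real" and x :: real and k :: 'n
  assumes inj_lam: "inj lam"
    and nearest: "\<And>m. \<bar>lam k - x\<bar> \<le> \<bar>lam m - x\<bar>"
begin

lemma lam_neq: "j \<noteq> k \<Longrightarrow> lam j \<noteq> x"
  using nearest[of j] inj_lam by (auto dest: injD)

lemma delta_k_le: "j \<noteq> k \<Longrightarrow> delta_k lam k \<le> 2 * \<bar>lam j - x\<bar>"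
proof -
  assume j: "j \<noteq> k"
  have "delta_k lam k \<le> \<bar>lam k - lam j\<bar>"
    unfolding delta_k_def using j by (intro Min_le) auto
  also have "\<dots> \<le> 2 * \<bar>lam j - x\<bar>"
    using nearest[of j] by (simp add: abs_le_iff abs_if split: if_splits; linarith)
  finally show ?thesis .
qed

lemma delta_k_pos: "j \<noteq> k \<Longrightarrow> delta_k lam k > 0"
proof -
  assume "j \<noteq> k"
  then have "delta_k lam k \<in> {\<bar>lam k - lam j\<bar> | j. j \<noteq> k}"
    unfolding delta_k_def by (intro Min_in) auto
  with inj_lam show ?thesis by (auto dest: injD)
qed

definition rescale :: "real^'n \<Rightarrow> real^'n" where
  "rescale v = (\<chi> j. if j = k then 0 else v$j * sqrt \<bar>lam j - x\<bar>)"

lemma absDk_sqrt_rescale: "v$k = 0 \<Longrightarrow> absDk_sqrt lam x k *v rescale v = v"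
  by (simp add: vec_eq_iff absDk_sqrt_def diag_mat_mult_vec rescale_def lam_neq)

lemma norm_absDk_sqrt_mult_le:
  assumes "j \<noteq> k"
  shows "norm (absDk_sqrt lam x k *v u) \<le> sqrt (2 / delta_k lam k) * norm u"
proof -
  have sqrt_nonneg: "sqrt (2 / delta_k lam k) \<ge> 0" using delta_k_pos[OF assms] by simp
  have "norm (absDk_sqrt lam x k *v u) \<le> norm (sqrt (2 / delta_k lam k) *\<^sub>R u)"
  proof (rule norm_le_componentwise_cart)
    fix i
    show "norm ((absDk_sqrt lam x k *v u)$i) \<le> norm ((sqrt (2 / delta_k lam k) *\<^sub>R u)$i)"
    proof (cases "i = k")
      case False
      have "1 / \<bar>lam i - x\<bar> \<le> 2 / delta_k lam k"
        using delta_k_le[OF False] lam_neq[OF False] delta_k_pos[OF assms]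
        by (simp add: field_simps)
      then have "1 / sqrt \<bar>lam i - x\<bar> \<le> sqrt (2 / delta_k lam k)"
        by (metis real_sqrt_le_mono real_sqrt_divide real_sqrt_one)
      from mult_left_mono[OF this abs_ge_zero[of "u$i"]] show ?thesis
        using False sqrt_nonneg by (simp add: absDk_sqrt_def diag_mat_mult_vec abs_mult mult.commute)
    qed (simp add: absDk_sqrt_def diag_mat_mult_vec sqrt_nonneg)
  qed
  then show ?thesis using sqrt_nonneg by simp
qed

lemma norm_rescale_le:
  fixes E :: "real^'n^'n"
  defines "\<Lambda> \<equiv> absDk_sqrt lam x k ** E ** absDk_sqrt lam x k"
  assumes small: "mat_opnorm \<Lambda> < 1"
    and vk: "v$k = 0"
    and eq: "\<And>j. j \<noteq> k \<Longrightarrow> (lam j - x) * v$j = - (E *v v)$j - c$j"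
  shows "norm (rescale v) \<le> norm (absDk_sqrt lam x k *v c) / (1 - mat_opnorm \<Lambda>)"
proof -
  let ?A = "absDk_sqrt lam x k"
  have \<Lambda>_rescale: "\<Lambda> *v rescale v = ?A *v (E *v v)"
  proof -
    have "\<Lambda> *v rescale v = (?A ** E) *v (?A *v rescale v)"
      unfolding \<Lambda>_def by (rule matrix_vector_mul_assoc[symmetric])
    then show ?thesis by (simp add: absDk_sqrt_rescale[OF vk] matrix_vector_mul_assoc)
  qed
  have "norm (rescale v) \<le> norm (\<Lambda> *v rescale v + ?A *v c)"
  proof (rule norm_le_componentwise_cart)
    fix j
    show "norm (rescale v $ j) \<le> norm ((\<Lambda> *v rescale v + ?A *v c)$j)"
    proof (cases "j = k")
      case False
      define s where "s = sqrt \<bar>lam j - x\<bar>"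
      have s: "s > 0" "\<bar>lam j - x\<bar> = s * s" using lam_neq[OF False] by (simp_all add: s_def)
      have "s * s * \<bar>v$j\<bar> = \<bar>(E *v v)$j + c$j\<bar>"
        using arg_cong[OF eq[OF False], of abs] by (simp add: abs_mult s(2))
      then have "\<bar>v$j\<bar> * s = \<bar>(E *v v)$j + c$j\<bar> / s" using s by (simp add: field_simps)
      moreover have "(\<Lambda> *v rescale v + ?A *v c)$j = ((E *v v)$j + c$j) / s"
        unfolding \<Lambda>_rescale using False
        by (simp add: absDk_sqrt_def diag_mat_mult_vec s_def add_divide_distrib)
      ultimately show ?thesis using False s(1) by (simp add: rescale_def s_def[symmetric] abs_mult)
    qed (simp add: rescale_def)
  qed
  also have "\<dots> \<le> mat_opnorm \<Lambda> * norm (rescale v) + norm (?A *v c)"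
    using norm_triangle_ineq[of "\<Lambda> *v rescale v" "?A *v c"]
      norm_mult_vec_le_mat_opnorm[of \<Lambda> "rescale v"] by linarith
  finally show ?thesis using small by (simp add: field_simps)
qed

lemma homogeneous_solution_eq_0:
  fixes E :: "real^'n^'n"
  assumes small: "mat_opnorm (absDk_sqrt lam x k ** E ** absDk_sqrt lam x k) < 1"
    and vk: "v$k = 0"
    and eq: "\<And>j. j \<noteq> k \<Longrightarrow> (lam j - x) * v$j = - (E *v v)$j"
  shows "v = 0"
proof -
  have "norm (rescale v) \<le> 0"
    using norm_rescale_le[OF small vk, of 0] eq by simp
  then show ?thesis using absDk_sqrt_rescale[OF vk] by (metis norm_le_zero_iff matrix_vector_mult_0_right)
qed

lemma invertible_I_minus_Dk_E_Pk:
  assumes "mat_opnorm (absDk_sqrt lam x k ** E ** absDk_sqrt lam x k) < 1"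
  shows "invertible (mat 1 - Dk lam x k ** E ** Pk k)"
  unfolding invertible_left_inverse matrix_left_invertible_ker
proof (intro allI impI)
  fix v :: "real^'n"
  assume "(mat 1 - Dk lam x k ** E ** Pk k) *v v = 0"
  then have v: "v = Dk lam x k *v (E *v (Pk k *v v))"
    by (simp add: matrix_vector_mult_diff_rdistrib matrix_vector_mul_assoc matrix_mul_assoc)
  have vk: "v$k = 0" by (subst v) (simp add: Dk_def uminus_diag_mat diag_mat_mult_vec)
  have "Pk k *v v = v" using vk by (simp add: Pk_def diag_mat_mult_vec vec_eq_iff)
  then have "v$j = - (E *v v)$j / (lam j - x)" if "j \<noteq> k" for j
    using that by (subst v) (simp add: Dk_def uminus_diag_mat diag_mat_mult_vec)
  then show "v = 0"
    using homogeneous_solution_eq_0[OF assms vk] lam_neq by simp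
qed

lemma eigenvector_component_neq_0:
  assumes "mat_opnorm (absDk_sqrt lam x k ** E ** absDk_sqrt lam x k) < 1"
    and "\<eta> \<noteq> 0" and "(diag_mat lam + E) *v \<eta> = x *\<^sub>R \<eta>"
  shows "\<eta>$k \<noteq> 0"
  using homogeneous_solution_eq_0[OF assms(1) _ eigenvector_diag_plus_component[OF assms(3)]] assms(2)
  by blast

lemma eigenvector_deviation_le:
  fixes E :: "real^'n^'n"
  defines "l \<equiv> mat_opnorm (absDk_sqrt lam x k ** E ** absDk_sqrt lam x k)"
  assumes small: "l < 1"
    and eig: "(diag_mat lam + E) *v \<eta> = x *\<^sub>R \<eta>" and \<eta>k: "\<eta>$k = 1"
  shows "norm (\<eta> - axis k 1) \<le> sqrt (2 / delta_k lam k) * (1 / (1 - l))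
           * norm (absDk_sqrt lam x k *v (E *v axis k 1))"
proof (cases "\<exists>j. j \<noteq> k")
  case False
  then have "\<eta> - axis k 1 = 0" "absDk_sqrt lam x k *v (E *v axis k 1) = 0"
    using \<eta>k by (auto simp: vec_eq_iff axis_def absDk_sqrt_def diag_mat_mult_vec)
  then show ?thesis by simp
next
  case True
  then obtain j where j: "j \<noteq> k" by blast
  define v where "v = \<eta> - axis k 1"
  have vk: "v$k = 0" using \<eta>k by (simp add: v_def)
  have "(lam i - x) * v$i = - (E *v v)$i - (E *v axis k 1)$i" if "i \<noteq> k" for i
    using eigenvector_diag_plus_component[OF eig, of i] that
    by (simp add: v_def matrix_vector_mult_diff_distrib axis_def)
  note rescale_le = norm_rescale_le[OF small[unfolded l_def] vk this, folded l_def]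
  have "norm v = norm (absDk_sqrt lam x k *v rescale v)" by (simp add: absDk_sqrt_rescale[OF vk])
  also have "\<dots> \<le> sqrt (2 / delta_k lam k) * norm (rescale v)"
    by (rule norm_absDk_sqrt_mult_le[OF j])
  also have "\<dots> \<le> sqrt (2 / delta_k lam k) * (norm (absDk_sqrt lam x k *v (E *v axis k 1)) / (1 - l))"
    using delta_k_pos[OF j] by (intro mult_left_mono[OF rescale_le]) auto
  finally show ?thesis by (simp add: v_def)
qed

end

theorem mainTheorem5:
  fixes lam :: "'n::finite \<Rightarrow> real" and E :: "real^'n^'n" and x :: real and k :: 'n
  assumes nonneg: "\<And>j. lam j \<ge> 0"
    and distinct: "inj lam"
    and sym: "transpose E = E"
    and eig: "\<exists>v. v \<noteq> 0 \<and> (diag_mat lam + E) *v v = x *\<^sub>R v"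
    and argmin: "\<And>m. \<bar>lam k - x\<bar> \<le> \<bar>lam m - x\<bar>"
    and small: "mat_opnorm (absDk_sqrt lam x k ** E ** absDk_sqrt lam x k) < 1"
  shows "invertible (mat 1 - Dk lam x k ** E ** Pk k)
    \<and> (\<forall>\<eta>. \<eta> \<noteq> 0 \<and> (diag_mat lam + E) *v \<eta> = x *\<^sub>R \<eta> \<longrightarrow>
          inner \<eta> (axis k 1) \<noteq> 0
        \<and> (inner \<eta> (axis k 1) = 1 \<longrightarrow>
            norm (\<eta> - axis k 1) \<le>
              sqrt (2 / delta_k lam k)
              * (1 / (1 - mat_opnorm (absDk_sqrt lam x k ** E ** absDk_sqrt lam x k)))
              * sqrt (\<Sum>j\<in>{j. j \<noteq> k}. (E $ j $ k)^2 / \<bar>lam j - x\<bar>)))"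
proof -
  interpret nearest_eigenvalue lam x k
    using distinct argmin by unfold_locales
  show ?thesis
    using invertible_I_minus_Dk_E_Pk[OF small] eigenvector_component_neq_0[OF small]
      eigenvector_deviation_le[OF small] norm_absDk_sqrt_column[of lam x k E]
    by (simp add: inner_axis)
qed

end
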